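(* There exist positive integers $n<m$ and a distribution $F$ such that the TWDPP mechanism is asymptotically stable with respect to $F^n$, but the UDPP mechanism is unstable (not asymptotically stable) with respect to $F^n$.
   Context: Dynamic posted-price setting: at each time step a block with $m$ slots is produced; $n$ bidders arrive with values drawn i.i.d. from $F$ (joint distribution $F^n$), each participating once and bidding truthfully. Given posted price $q>0$, $M(q)=\{i:b_i\ge q\}$. Both mechanisms use the random maximal allocation: $B$ is a uniformly random subset of $M(q)$ of size $\min\{m,|M(q)|\}$; each $i\in B$ gets a slot and pays $q$; the next price is $T(q,B)$. UDPP: $T_U(q,B)=\alpha\frac{|B|}{m}(1+\delta)q+(1-\alpha)q$. TWDPP: $T_{TW}(q,B)=\alpha\frac1m\sum_{i\in B}\min\{b_i,(1+\delta)q\}+(1-\alpha)q$ if $|B|<m$, and $\alpha(1+\delta)q+(1-\alpha)q$ if $|B|=m$. Here $\alpha\in(0,1)$, $\delta\in(0,\infty)$. Let $E_T(q)=\mathbb{E}[T(q,B)]$ over values and allocation; an equilibrium price is $z$ with $E_T(z)=z$. The mechanism is asymptotically stable with respect to $F^n$ if for every $q_0>0$ the sequence $q_{k+1}=E_T(q_k)$ converges to an equilibrium price; otherwise it is unstable. *)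

theory Defs
  imports "HOL-Probability.Probability"
begin

text \<open>Bidders are indexed by {..<n}; a bid profile is b :: nat \<Rightarrow> real.
  An update rule T takes the current price q, the bid profile b and the allocated set B.\<close>

definition eligible :: "nat \<Rightarrow> real \<Rightarrow> (nat \<Rightarrow> real) \<Rightarrow> nat set" where
  "eligible n q b = {i \<in> {..<n}. q \<le> b i}"

definition alloc_sets :: "nat \<Rightarrow> nat \<Rightarrow> real \<Rightarrow> (nat \<Rightarrow> real) \<Rightarrow> nat set set" where
  "alloc_sets n m q b =
     {B. B \<subseteq> eligible n q b \<and> card B = min m (card (eligible n q b))}"

definition T_U :: "real \<Rightarrow> real \<Rightarrow> nat \<Rightarrow> real \<Rightarrow> (nat \<Rightarrow> real) \<Rightarrow> nat set \<Rightarrow> real" where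
  "T_U \<alpha> \<delta> m q b B = \<alpha> * (real (card B) / real m) * (1 + \<delta>) * q + (1 - \<alpha>) * q"

definition T_TW :: "real \<Rightarrow> real \<Rightarrow> nat \<Rightarrow> real \<Rightarrow> (nat \<Rightarrow> real) \<Rightarrow> nat set \<Rightarrow> real" where
  "T_TW \<alpha> \<delta> m q b B =
     (if card B < m
      then \<alpha> * (1 / real m) * (\<Sum>i\<in>B. min (b i) ((1 + \<delta>) * q)) + (1 - \<alpha>) * q
      else \<alpha> * (1 + \<delta>) * q + (1 - \<alpha>) * q)"

definition expected_price ::
  "(real \<Rightarrow> (nat \<Rightarrow> real) \<Rightarrow> nat set \<Rightarrow> real) \<Rightarrow> nat \<Rightarrow> nat \<Rightarrow> real measure \<Rightarrow> real \<Rightarrow> real" where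
  "expected_price T n m F q =
     (\<integral>b. measure_pmf.expectation (pmf_of_set (alloc_sets n m q b)) (\<lambda>B. T q b B)
        \<partial>(PiM {..<n} (\<lambda>_. F)))"

definition equilibrium_price :: "(real \<Rightarrow> real) \<Rightarrow> real \<Rightarrow> bool" where
  "equilibrium_price E z \<longleftrightarrow> z > 0 \<and> E z = z"

definition asymptotically_stable :: "(real \<Rightarrow> real) \<Rightarrow> bool" where
  "asymptotically_stable E \<longleftrightarrow>
     (\<forall>q0 > 0. \<exists>z. equilibrium_price E z \<and> (\<lambda>k. (E ^^ k) q0) \<longlonglongrightarrow> z)"

end

theory Submission
  imports Defs
begin

text \<open>
  Let every bidder value a slot at exactly 1 and let n < m, so that at a price q \<le> 1 all n
  bidders are served and at q > 1 nobody is. With z = n/m, UDPP multiplies the price by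
  \<alpha>z(1+\<delta>) + 1 - \<alpha> on (0,1] and by 1 - \<alpha> above 1; once (1+\<delta>)z > 1 the first factor
  exceeds 1, so there is no positive fixed point at all. TWDPP caps each bid at (1+\<delta>)q,
  which makes it the contraction q \<mapsto> z + (1-\<alpha>)(q-z) on the interval [1/(1+\<delta>), 1]. Every
  orbit enters that interval (shrinking geometrically from above, growing geometrically from
  below) and then converges to z.
\<close>

lemma measurable_eligible:
  "eligible n q \<in> measurable (PiM {..<n} (\<lambda>_. borel :: real measure)) (count_space (Pow {..<n}))"
proof (subst measurable_count_space_eq2)
  let ?M = "PiM {..<n} (\<lambda>_. borel :: real measure)"
  show "finite (Pow {..<n})" by simp
  show "eligible n q \<in> space ?M \<rightarrow> Pow {..<n} \<and>
    (\<forall>S\<in>Pow {..<n}. eligible n q -` {S} \<inter> space ?M \<in> sets ?M)"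
  proof safe
    fix S assume "S \<subseteq> {..<n}"
    then have "eligible n q -` {S} \<inter> space ?M = {b \<in> space ?M. \<forall>i\<in>{..<n}. q \<le> b i \<longleftrightarrow> i \<in> S}"
      unfolding eligible_def by blast
    also have "\<dots> \<in> sets ?M"
      by measurable
    finally show "eligible n q -` {S} \<inter> space ?M \<in> sets ?M" .
  qed (auto simp: eligible_def)
qed

lemma borel_measurable_alloc_expectation:
  fixes T :: "real \<Rightarrow> (nat \<Rightarrow> real) \<Rightarrow> nat set \<Rightarrow> real"
  assumes T: "\<And>B. B \<subseteq> {..<n} \<Longrightarrow> (\<lambda>b. T q b B) \<in> borel_measurable (PiM {..<n} (\<lambda>_. borel))"
  shows "(\<lambda>b. measure_pmf.expectation (pmf_of_set (alloc_sets n m q b)) (\<lambda>B. T q b B))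
           \<in> borel_measurable (PiM {..<n} (\<lambda>_. borel))"
proof -
  define A where "A S = {B. B \<subseteq> S \<and> card B = min m (card S)}" for S :: "nat set"
  define h where "h S b = (\<Sum>B\<in>A S. T q b B) / real (card (A S))" for S b
  have A_finite: "finite (A S)" if "S \<subseteq> {..<n}" for S
    using that unfolding A_def by (simp add: finite_subset)
  have A_nonempty: "A S \<noteq> {}" for S
  proof -
    obtain B where "B \<subseteq> S" "card B = min m (card S)"
      using obtain_subset_with_card_n[of "min m (card S)" S] by auto
    then show ?thesis unfolding A_def by blast
  qed
  have eligible_subset: "eligible n q b \<subseteq> {..<n}" for b
    unfolding eligible_def by blast
  have expectation_eq: "measure_pmf.expectation (pmf_of_set (alloc_sets n m q b)) (\<lambda>B. T q b B)
      = h (eligible n q b) b" for b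
    using A_finite[OF eligible_subset] A_nonempty
    by (simp add: alloc_sets_def h_def flip: A_def add: integral_pmf_of_set)
  have "(\<lambda>b. h (eligible n q b) b) \<in> borel_measurable (PiM {..<n} (\<lambda>_. borel))"
  proof (rule measurable_compose_countable'[OF _ measurable_eligible])
    fix S assume "S \<in> Pow {..<n}"
    then have "(\<lambda>b. T q b B) \<in> borel_measurable (PiM {..<n} (\<lambda>_. borel))" if "B \<in> A S" for B
      using that T unfolding A_def by blast
    then show "(\<lambda>b. h S b) \<in> borel_measurable (PiM {..<n} (\<lambda>_. borel))"
      unfolding h_def by (intro borel_measurable_divide borel_measurable_sum) auto
  qed (simp add: countable_finite)
  then show ?thesis
    by (simp add: expectation_eq)
qed

lemma expected_price_return:
  fixes T :: "real \<Rightarrow> (nat \<Rightarrow> real) \<Rightarrow> nat set \<Rightarrow> real"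
  assumes "\<And>B. B \<subseteq> {..<n} \<Longrightarrow> (\<lambda>b. T q b B) \<in> borel_measurable (PiM {..<n} (\<lambda>_. borel))"
  shows "expected_price T n m (return borel c) q =
    measure_pmf.expectation (pmf_of_set (alloc_sets n m q (\<lambda>i\<in>{..<n}. c))) (\<lambda>B. T q (\<lambda>i\<in>{..<n}. c) B)"
proof -
  have "PiM {..<n} (\<lambda>_. return borel c) = return (PiM {..<n} (\<lambda>_. borel)) (\<lambda>i\<in>{..<n}. c)"
    using PiM_return[where I = "{..<n}" and M = "\<lambda>_. borel" and a = "\<lambda>_. c"] by simp
  then show ?thesis
    unfolding expected_price_def
    by (simp add: integral_return space_PiM borel_measurable_alloc_expectation assms)
qed

lemma alloc_sets_const:
  assumes "n \<le> m"
  shows "alloc_sets n m q (\<lambda>i\<in>{..<n}. c) = (if q \<le> c then {{..<n}} else {{}})"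
proof -
  have "eligible n q (\<lambda>i\<in>{..<n}. c) = (if q \<le> c then {..<n} else {})"
    unfolding eligible_def by auto
  moreover have "B = {..<n}" if "B \<subseteq> {..<n}" "card B = n" for B
    using that by (metis card_lessThan card_subset_eq finite_lessThan)
  ultimately show ?thesis
    using assms unfolding alloc_sets_def by (auto simp: min_def)
qed

definition twdpp_unit_price_map :: "real \<Rightarrow> real \<Rightarrow> real \<Rightarrow> real \<Rightarrow> real" where
  "twdpp_unit_price_map \<alpha> \<delta> z q =
     (if q \<le> 1 then \<alpha> * z * min 1 ((1 + \<delta>) * q) + (1 - \<alpha>) * q else (1 - \<alpha>) * q)"

definition udpp_unit_price_map :: "real \<Rightarrow> real \<Rightarrow> real \<Rightarrow> real \<Rightarrow> real" where
  "udpp_unit_price_map \<alpha> \<delta> z q =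
     (if q \<le> 1 then \<alpha> * z * (1 + \<delta>) * q + (1 - \<alpha>) * q else (1 - \<alpha>) * q)"

lemma borel_measurable_T_TW:
  assumes "B \<subseteq> {..<n}"
  shows "(\<lambda>b. T_TW \<alpha> \<delta> m q b B) \<in> borel_measurable (PiM {..<n} (\<lambda>_. borel))"
proof -
  have "(\<lambda>b. \<Sum>i\<in>B. min (b i) ((1 + \<delta>) * q)) \<in> borel_measurable (PiM {..<n} (\<lambda>_. borel))"
    using assms by (intro borel_measurable_sum borel_measurable_min measurable_component_singleton) auto
  then show ?thesis
    unfolding T_TW_def by (cases "card B < m") auto
qed

lemma expected_price_TW_unit_bids:
  assumes "n < m"
  shows "expected_price (T_TW \<alpha> \<delta> m) n m (return borel 1) = twdpp_unit_price_map \<alpha> \<delta> (n / m)"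
proof
  fix q
  show "expected_price (T_TW \<alpha> \<delta> m) n m (return borel 1) q = twdpp_unit_price_map \<alpha> \<delta> (n / m) q"
    using assms
    by (subst expected_price_return[OF borel_measurable_T_TW])
      (simp_all add: alloc_sets_const pmf_of_set_singleton T_TW_def twdpp_unit_price_map_def)
qed

lemma expected_price_U_unit_bids:
  assumes "n < m"
  shows "expected_price (T_U \<alpha> \<delta> m) n m (return borel 1) = udpp_unit_price_map \<alpha> \<delta> (n / m)"
proof
  fix q
  show "expected_price (T_U \<alpha> \<delta> m) n m (return borel 1) q = udpp_unit_price_map \<alpha> \<delta> (n / m) q"
    using assms
    by (simp add: expected_price_return alloc_sets_const pmf_of_set_singleton T_U_def
        udpp_unit_price_map_def)
qed

lemma funpow_leaves_scaling_region:
  fixes f :: "'a::monoid_mult \<Rightarrow> 'a"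
  assumes "\<And>x. x \<in> S \<Longrightarrow> f x = c * x" and "c ^ N * x \<notin> S"
  shows "\<exists>k. (f ^^ k) x \<notin> S"
  using assms(2)
proof (induction N arbitrary: x)
  case 0
  then show ?case by (metis funpow_0 mult_1 power_0)
next
  case (Suc N)
  show ?case
  proof (cases "x \<in> S")
    case True
    then have "f x = c * x" by (rule assms(1))
    moreover have "c ^ N * (c * x) \<notin> S"
      using Suc.prems by (metis mult.assoc power_Suc2)
    ultimately obtain k where "(f ^^ k) (f x) \<notin> S"
      using Suc.IH by auto
    then show ?thesis
      by (metis funpow_Suc_right o_apply)
  qed (metis funpow_0)
qed

lemma not_asymptotically_stable_if_no_equilibrium:
  assumes "\<And>z. \<not> equilibrium_price E z"
  shows "\<not> asymptotically_stable E"
  using assms zero_less_one unfolding asymptotically_stable_def by blast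

lemma udpp_unit_price_map_no_equilibrium:
  assumes "0 < \<alpha>" and "1 < (1 + \<delta>) * z"
  shows "\<not> equilibrium_price (udpp_unit_price_map \<alpha> \<delta> z) w"
proof
  assume "equilibrium_price (udpp_unit_price_map \<alpha> \<delta> z) w"
  then have w: "0 < w" "udpp_unit_price_map \<alpha> \<delta> z w = w"
    unfolding equilibrium_price_def by auto
  show False
  proof (cases "w \<le> 1")
    case True
    then have "\<alpha> * w * ((1 + \<delta>) * z) = \<alpha> * w * 1"
      using w unfolding udpp_unit_price_map_def by (simp add: algebra_simps)
    then show False
      using assms w by simp
  next
    case False
    then show False
      using assms w unfolding udpp_unit_price_map_def by simp
  qed
qed

locale twdpp_unit_dynamics =
  fixes \<alpha> \<delta> z :: real
  assumes \<alpha>_pos: "0 < \<alpha>" and \<alpha>_less_one: "\<alpha> < 1" and \<delta>_pos: "0 < \<delta>"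
    and z_less_one: "z < 1" and z_large: "1 < (1 + \<delta>) * z"
begin

abbreviation E :: "real \<Rightarrow> real" where
  "E \<equiv> twdpp_unit_price_map \<alpha> \<delta> z"

lemma z_pos: "0 < z"
  using z_large \<delta>_pos by (smt (verit) mult_nonneg_nonpos)

lemma E_pos: "0 < q \<Longrightarrow> 0 < E q"
  using \<alpha>_pos \<alpha>_less_one \<delta>_pos z_pos
  unfolding twdpp_unit_price_map_def by (auto simp: min_def intro!: add_pos_pos)

lemma E_le_one: "q \<le> 1 \<Longrightarrow> E q \<le> 1"
proof -
  assume "q \<le> 1"
  have "z * min 1 ((1 + \<delta>) * q) \<le> z * 1"
    using z_pos by (intro mult_left_mono) auto
  then have "\<alpha> * (z * min 1 ((1 + \<delta>) * q)) + (1 - \<alpha>) * q \<le> \<alpha> * 1 + (1 - \<alpha>) * 1"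
    using \<alpha>_pos \<alpha>_less_one z_less_one \<open>q \<le> 1\<close> by (intro add_mono mult_left_mono) auto
  then show "E q \<le> 1"
    using \<open>q \<le> 1\<close> unfolding twdpp_unit_price_map_def by (simp add: mult.assoc)
qed

lemma funpow_E_pos: "0 < q \<Longrightarrow> 0 < (E ^^ k) q"
  by (induction k) (auto intro: E_pos)

lemma funpow_E_le_one: "q \<le> 1 \<Longrightarrow> (E ^^ k) q \<le> 1"
  by (induction k) (auto intro: E_le_one)

lemma E_on_band:
  assumes "1 \<le> (1 + \<delta>) * p" "p \<le> 1"
  shows "E p = z + (1 - \<alpha>) * (p - z)" and "1 \<le> (1 + \<delta>) * E p"
proof -
  show E_eq: "E p = z + (1 - \<alpha>) * (p - z)"
    using assms unfolding twdpp_unit_price_map_def by (simp add: algebra_simps)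
  have "\<alpha> * 1 + (1 - \<alpha>) * 1 \<le> \<alpha> * ((1 + \<delta>) * z) + (1 - \<alpha>) * ((1 + \<delta>) * p)"
    using \<alpha>_pos \<alpha>_less_one z_large assms(1) by (intro add_mono mult_left_mono) auto
  then show "1 \<le> (1 + \<delta>) * E p"
    unfolding E_eq by (simp add: algebra_simps)
qed

lemma funpow_E_on_band:
  assumes "1 \<le> (1 + \<delta>) * p" "p \<le> 1"
  shows "(E ^^ k) p = z + (1 - \<alpha>) ^ k * (p - z) \<and> 1 \<le> (1 + \<delta>) * (E ^^ k) p"
proof (induction k)
  case (Suc k)
  have "(E ^^ k) p \<le> 1"
    using assms(2) by (rule funpow_E_le_one)
  with Suc.IH have band: "1 \<le> (1 + \<delta>) * (E ^^ k) p" "(E ^^ k) p \<le> 1"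
    by blast+
  have "(E ^^ Suc k) p = z + (1 - \<alpha>) * ((E ^^ k) p - z)"
    using E_on_band(1)[OF band] by simp
  also have "\<dots> = z + (1 - \<alpha>) ^ Suc k * (p - z)"
    using Suc.IH by simp
  finally show ?case
    using E_on_band(2)[OF band] by simp
qed (use assms in simp)

lemma orbit_falls_to_unit_interval:
  assumes "0 < q"
  shows "\<exists>k. (E ^^ k) q \<le> 1"
proof -
  obtain N where "(1 - \<alpha>) ^ N < 1 / q"
    using real_arch_pow_inv[of "1 / q" "1 - \<alpha>"] \<alpha>_pos assms by auto
  then have "(1 - \<alpha>) ^ N * q \<notin> {1<..}"
    using assms by (simp add: field_simps)
  moreover have "E x = (1 - \<alpha>) * x" if "x \<in> {1<..}" for x
    using that unfolding twdpp_unit_price_map_def by simp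
  ultimately have "\<exists>k. (E ^^ k) q \<notin> {1<..}"
    by (rule funpow_leaves_scaling_region[rotated])
  then show ?thesis
    by (auto simp: not_less)
qed

lemma orbit_rises_to_band:
  assumes "0 < p" "p \<le> 1"
  shows "\<exists>j. 1 \<le> (1 + \<delta>) * (E ^^ j) p \<and> (E ^^ j) p \<le> 1"
proof -
  define r where "r = \<alpha> * ((1 + \<delta>) * z) + (1 - \<alpha>)"
  have "1 < r"
    using \<alpha>_pos z_large unfolding r_def by simp
  then obtain M where "1 / ((1 + \<delta>) * p) < r ^ M"
    using real_arch_pow by blast
  then have "1 < r ^ M * ((1 + \<delta>) * p)"
    using assms \<delta>_pos by (simp add: divide_less_eq)
  then have "r ^ M * p \<notin> {x. (1 + \<delta>) * x < 1}"
    by (simp add: ac_simps)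
  moreover have "E x = r * x" if "x \<in> {x. (1 + \<delta>) * x < 1}" for x
  proof -
    have "x \<le> 1"
    proof (rule ccontr)
      assume "\<not> x \<le> 1"
      then have "1 * 1 \<le> (1 + \<delta>) * x"
        using \<delta>_pos by (intro mult_mono) auto
      then show False
        using that by simp
    qed
    then show ?thesis
      using that unfolding twdpp_unit_price_map_def r_def by (simp add: algebra_simps)
  qed
  ultimately have "\<exists>j. (E ^^ j) p \<notin> {x. (1 + \<delta>) * x < 1}"
    by (rule funpow_leaves_scaling_region[rotated])
  then obtain j where "1 \<le> (1 + \<delta>) * (E ^^ j) p"
    by (auto simp: not_less)
  moreover have "(E ^^ j) p \<le> 1"
    using assms(2) by (rule funpow_E_le_one)
  ultimately show ?thesis
    by blast
qed

lemma orbit_enters_band: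
  assumes "0 < q"
  shows "\<exists>k. 1 \<le> (1 + \<delta>) * (E ^^ k) q \<and> (E ^^ k) q \<le> 1"
proof -
  obtain k where "(E ^^ k) q \<le> 1"
    using orbit_falls_to_unit_interval[OF assms] by blast
  moreover have "0 < (E ^^ k) q"
    using assms by (rule funpow_E_pos)
  ultimately obtain j where "1 \<le> (1 + \<delta>) * (E ^^ j) ((E ^^ k) q) \<and> (E ^^ j) ((E ^^ k) q) \<le> 1"
    using orbit_rises_to_band by blast
  moreover have "(E ^^ j) ((E ^^ k) q) = (E ^^ (j + k)) q"
    by (simp add: funpow_add)
  ultimately show ?thesis
    by metis
qed

lemma orbit_tendsto: "0 < q \<Longrightarrow> (\<lambda>k. (E ^^ k) q) \<longlonglongrightarrow> z"
proof -
  assume "0 < q"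
  then obtain k where band: "1 \<le> (1 + \<delta>) * (E ^^ k) q" "(E ^^ k) q \<le> 1"
    using orbit_enters_band by blast
  define p where "p = (E ^^ k) q"
  have "(\<lambda>j. (E ^^ (j + k)) q) = (\<lambda>j. z + (1 - \<alpha>) ^ j * (p - z))"
    using funpow_E_on_band[OF band] unfolding p_def by (simp add: funpow_add)
  moreover have "(\<lambda>j. z + (1 - \<alpha>) ^ j * (p - z)) \<longlonglongrightarrow> z + 0 * (p - z)"
    using \<alpha>_pos \<alpha>_less_one by (intro tendsto_intros LIMSEQ_power_zero) auto
  ultimately show ?thesis
    using LIMSEQ_offset[of "\<lambda>j. (E ^^ j) q" k z] by simp
qed

lemma asymptotically_stable_E: "asymptotically_stable E"
proof -
  have "E z = z"
    using E_on_band(1)[of z] z_large z_less_one by simp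
  then show ?thesis
    unfolding asymptotically_stable_def equilibrium_price_def
    using orbit_tendsto z_pos by blast
qed

end

theorem mainTheorem6:
  fixes \<alpha> \<delta> :: real
  assumes "0 < \<alpha>" "\<alpha> < 1" "0 < \<delta>"
  shows "\<exists>(n::nat) (m::nat) (F::real measure).
           0 < n \<and> n < m \<and> prob_space F \<and> sets F = sets borel \<and>
           (AE x in F. 0 \<le> x) \<and>
           asymptotically_stable (expected_price (T_TW \<alpha> \<delta> m) n m F) \<and>
           \<not> asymptotically_stable (expected_price (T_U \<alpha> \<delta> m) n m F)"
proof -
  define n :: nat where "n = nat \<lceil>1 / \<delta>\<rceil> + 1"
  define m :: nat where "m = n + 1"
  have "1 / \<delta> < real n"
    unfolding n_def by linarith
  then have "real m < (1 + \<delta>) * real n"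
    using assms(3) unfolding m_def by (simp add: field_simps)
  then have z_large: "1 < (1 + \<delta>) * (real n / real m)"
    unfolding m_def by (simp add: field_simps)
  interpret twdpp_unit_dynamics \<alpha> \<delta> "real n / real m"
    using assms z_large unfolding m_def by unfold_locales auto
  have "n < m" "0 < n"
    unfolding m_def n_def by simp_all
  then show ?thesis
    using asymptotically_stable_E expected_price_TW_unit_bids expected_price_U_unit_bids
      not_asymptotically_stable_if_no_equilibrium udpp_unit_price_map_no_equilibrium[OF assms(1) z_large]
    by (intro exI[of _ n] exI[of _ m] exI[of _ "return borel (1::real)"])
       (auto simp: prob_space_return AE_return)
qed

end
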